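(* Let $X$ be a totally disconnected compact metrizable space, $T\colon X\to X$ a homeomorphism, $K$ a field with involution, $\mathcal A=C_K(X)\rtimes_T\mathbb Z$, $E\subseteq X$ a nonempty clopen set and $\mathcal P$ a partition of $X\setminus E$. Let $\mathcal B$ be the unital $*$-subalgebra of $\mathcal A$ generated by $\{\chi_Zt: Z\in\mathcal P\}$ and $\mathcal B_0=C_K(X)\cap\mathcal B$. Then $\mathcal B_0$ is the linear span of $1$ and the projections $$\chi_{T^{-r}(Z_{-r})\cap T^{-r+1}(Z_{-r+1})\cap\cdots\cap Z_0\cap T(Z_1)\cap\cdots\cap T^{s-1}(Z_{s-1})}$$ with $r,s\ge0$ and $Z_{-r},\dots,Z_{s-1}\in\mathcal P$.
   Context: $C_K(X)$ is the $*$-algebra of locally constant functions $X\to K$ (pointwise operations, $f^*=\bar f$), $\chi_U$ the characteristic function of a clopen $U$. $\mathcal A=C_K(X)\rtimes_T\mathbb Z$ is the algebraic crossed product: finite sums $\sum_if_it^i$ with $f_i\in C_K(X)$, multiplication determined by $tf=(f\circ T^{-1})t$ (so $t\chi_Ut^{-1}=\chi_{T(U)}$), involution $(ft^i)^*=t^{-i}f^*$, and $t^{-1}=t^*$. A partition of a clopen set $Y$ is a finite family of nonempty, pairwise disjoint clopen subsets with union $Y$. *)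

theory Defs
  imports "HOL-Analysis.Analysis"
begin

definition totally_disconnected_space :: "'x::topological_space itself \<Rightarrow> bool" where
  "totally_disconnected_space _ \<longleftrightarrow> (\<forall>S::'x set. connected S \<longrightarrow> (\<exists>a. S \<subseteq> {a}))"

definition clopen :: "'x::topological_space set \<Rightarrow> bool" where
  "clopen U \<longleftrightarrow> open U \<and> closed U"

text \<open>Locally constant functions X -> K (the elements of C_K(X)).\<close>
definition locally_constant :: "('x::topological_space \<Rightarrow> 'k) \<Rightarrow> bool" where
  "locally_constant f \<longleftrightarrow> (\<forall>x. \<exists>U. open U \<and> x \<in> U \<and> (\<forall>y\<in>U. f y = f x))"

definition field_involution :: "('k::field \<Rightarrow> 'k) \<Rightarrow> bool" where
  "field_involution cj \<longleftrightarrow> (\<forall>a b. cj (a + b) = cj a + cj b) \<and> (\<forall>a b. cj (a * b) = cj a * cj b)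
     \<and> (\<forall>a. cj (cj a) = a)"

definition clopen_partition :: "'x::topological_space set set \<Rightarrow> 'x set \<Rightarrow> bool" where
  "clopen_partition P Y \<longleftrightarrow> finite P \<and> (\<forall>Z\<in>P. Z \<noteq> {} \<and> clopen Z)
     \<and> (\<forall>Z1\<in>P. \<forall>Z2\<in>P. Z1 \<noteq> Z2 \<longrightarrow> Z1 \<inter> Z2 = {}) \<and> \<Union>P = Y"

definition Tpow :: "('x \<Rightarrow> 'x) \<Rightarrow> ('x \<Rightarrow> 'x) \<Rightarrow> int \<Rightarrow> 'x \<Rightarrow> 'x" where
  "Tpow T Ti i = (if 0 \<le> i then T ^^ nat i else Ti ^^ nat (- i))"

text \<open>Elements of the algebraic crossed product C_K(X) \<rtimes>_T Z are represented by their
  coefficient functions: a represents \<Sum>_n (a n) t^n.\<close>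
definition crossed :: "(int \<Rightarrow> 'x::topological_space \<Rightarrow> 'k::field) set" where
  "crossed = {a. finite {n. a n \<noteq> (\<lambda>_. 0)} \<and> (\<forall>n. locally_constant (a n))}"

text \<open>(f t^i)(g t^j) = f (g \<circ> T^{-i}) t^{i+j}\<close>
definition cp_mult :: "('x \<Rightarrow> 'x) \<Rightarrow> ('x \<Rightarrow> 'x) \<Rightarrow> (int \<Rightarrow> 'x \<Rightarrow> 'k::field)
    \<Rightarrow> (int \<Rightarrow> 'x \<Rightarrow> 'k) \<Rightarrow> (int \<Rightarrow> 'x \<Rightarrow> 'k)" where
  "cp_mult T Ti a b = (\<lambda>n x. \<Sum>i\<in>{i. a i \<noteq> (\<lambda>_. 0)}. a i x * b (n - i) (Tpow T Ti (- i) x))"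

definition cp_add :: "(int \<Rightarrow> 'x \<Rightarrow> 'k::field) \<Rightarrow> (int \<Rightarrow> 'x \<Rightarrow> 'k) \<Rightarrow> (int \<Rightarrow> 'x \<Rightarrow> 'k)" where
  "cp_add a b = (\<lambda>n x. a n x + b n x)"

definition cp_scale :: "'k::field \<Rightarrow> (int \<Rightarrow> 'x \<Rightarrow> 'k) \<Rightarrow> (int \<Rightarrow> 'x \<Rightarrow> 'k)" where
  "cp_scale c a = (\<lambda>n x. c * a n x)"

text \<open>(f t^i)^* = t^{-i} conj(f) = (conj(f) \<circ> T^i) t^{-i}\<close>
definition cp_star :: "('x \<Rightarrow> 'x) \<Rightarrow> ('x \<Rightarrow> 'x) \<Rightarrow> ('k::field \<Rightarrow> 'k) \<Rightarrow> (int \<Rightarrow> 'x \<Rightarrow> 'k)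
    \<Rightarrow> (int \<Rightarrow> 'x \<Rightarrow> 'k)" where
  "cp_star T Ti cj a = (\<lambda>n x. cj (a (- n) (Tpow T Ti (- n) x)))"

definition cp_embed :: "('x \<Rightarrow> 'k::field) \<Rightarrow> (int \<Rightarrow> 'x \<Rightarrow> 'k)" where
  "cp_embed f = (\<lambda>n. if n = 0 then f else (\<lambda>_. 0))"

definition cp_one :: "int \<Rightarrow> 'x \<Rightarrow> 'k::field" where
  "cp_one = cp_embed (\<lambda>_. 1)"

definition chi_t :: "'x set \<Rightarrow> (int \<Rightarrow> 'x \<Rightarrow> 'k::field)" where
  "chi_t Z = (\<lambda>n. if n = 1 then indicator Z else (\<lambda>_. 0))"

inductive_set star_subalg_gen :: "('x \<Rightarrow> 'x) \<Rightarrow> ('x \<Rightarrow> 'x) \<Rightarrow> ('k::field \<Rightarrow> 'k)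
    \<Rightarrow> (int \<Rightarrow> 'x \<Rightarrow> 'k) set \<Rightarrow> (int \<Rightarrow> 'x \<Rightarrow> 'k) set"
  for T Ti cj S where
    gen_one: "cp_one \<in> star_subalg_gen T Ti cj S"
  | gen_base: "s \<in> S \<Longrightarrow> s \<in> star_subalg_gen T Ti cj S"
  | gen_add: "a \<in> star_subalg_gen T Ti cj S \<Longrightarrow> b \<in> star_subalg_gen T Ti cj S
      \<Longrightarrow> cp_add a b \<in> star_subalg_gen T Ti cj S"
  | gen_scale: "a \<in> star_subalg_gen T Ti cj S \<Longrightarrow> cp_scale c a \<in> star_subalg_gen T Ti cj S"
  | gen_mult: "a \<in> star_subalg_gen T Ti cj S \<Longrightarrow> b \<in> star_subalg_gen T Ti cj S
      \<Longrightarrow> cp_mult T Ti a b \<in> star_subalg_gen T Ti cj S"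
  | gen_star: "a \<in> star_subalg_gen T Ti cj S \<Longrightarrow> cp_star T Ti cj a \<in> star_subalg_gen T Ti cj S"

definition kspan :: "(int \<Rightarrow> 'x \<Rightarrow> 'k::field) set \<Rightarrow> (int \<Rightarrow> 'x \<Rightarrow> 'k) set" where
  "kspan S = {(\<lambda>n x. \<Sum>v\<in>F. c v * v n x) | F c. finite F \<and> F \<subseteq> S}"

end

theory Submission
  imports Defs
begin

text \<open>
  Write \<open>\<chi>_S t^n\<close> for the monomial with coefficient \<open>\<chi>_S\<close> in degree \<open>n\<close>; then
  \<open>(\<chi>_A t^i)(\<chi>_B t^j) = \<chi>_{A \<inter> T^i(B)} t^{i+j}\<close> and \<open>(\<chi>_A t^i)^* = \<chi>_{T^{-i}(A)} t^{-i}\<close>.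
  Call \<open>\<Inter>_{a \<le> k \<le> b} T^k(Z_k)\<close> with all \<open>Z_k \<in> P\<close> a cylinder of degree \<open>n\<close> if the window
  \<open>[a, b]\<close> contains the positions \<open>0, \<dots>, n - 1\<close> (resp. \<open>n, \<dots>, -1\<close> if \<open>n < 0\<close>) occupied by a
  word of length \<open>|n|\<close> in the generators. As the members of \<open>P\<close> are pairwise disjoint,
  \<open>A \<inter> T^i(B)\<close> is empty or a cylinder of degree \<open>i + j\<close> for cylinders \<open>A, B\<close> of degrees
  \<open>i, j\<close>, and \<open>T^n\<close> maps cylinders of degree \<open>-n\<close> to cylinders of degree \<open>n\<close>. Hence every
  element of the generated \<open>*\<close>-subalgebra has its \<open>t^n\<close>-coefficient in the span of the
  indicators of cylinders of degree \<open>n\<close>, and for \<open>n = 0\<close> these are the projections of the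
  statement. Conversely \<open>x = (\<chi>_{Z_0} t) \<cdots> (\<chi>_{Z_{s-1}} t) = \<chi>_C t^s\<close> with
  \<open>C = Z_0 \<inter> T(Z_1) \<inter> \<dots> \<inter> T^{s-1}(Z_{s-1})\<close> yields the projections \<open>x x^* = \<chi>_C\<close> and
  \<open>x^* x = \<chi>_{T^{-s}(C)}\<close>, and their products are all the projections of the statement.
\<close>

section \<open>Spans and locally constant functions\<close>

lemma field_involution_0:
  assumes "field_involution cj" shows "cj 0 = 0"
  using assms unfolding field_involution_def by (metis add.right_neutral add_left_cancel)

lemma field_involution_1:
  assumes "field_involution cj" shows "cj 1 = 1"
proof -
  have mult: "cj (a * b) = cj a * cj b" and invol: "cj (cj a) = a" for a b
    using assms unfolding field_involution_def by auto
  have "cj 1 \<noteq> 0"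
    using invol[of 1] field_involution_0[OF assms] by auto
  moreover have "cj 1 * cj 1 = cj 1 * 1"
    using mult[of 1 1] by simp
  ultimately show ?thesis by simp
qed

lemma field_involution_indicator:
  "field_involution cj \<Longrightarrow> cj (indicator S x) = indicator S x"
  by (simp add: indicator_def field_involution_0 field_involution_1)

lemma locally_constant_const: "locally_constant (\<lambda>_. c)"
  unfolding locally_constant_def by (auto intro: exI[of _ UNIV])

lemma locally_constant_combine:
  assumes "locally_constant f" "locally_constant g"
  shows "locally_constant (\<lambda>x. h (f x) (g x))"
  unfolding locally_constant_def
proof
  fix x
  obtain U where U: "open U" "x \<in> U" "\<forall>y\<in>U. f y = f x"
    using assms(1) unfolding locally_constant_def by blast
  obtain V where V: "open V" "x \<in> V" "\<forall>y\<in>V. g y = g x"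
    using assms(2) unfolding locally_constant_def by blast
  have "h (f y) (g y) = h (f x) (g x)" if "y \<in> U \<inter> V" for y
    using that U(3) V(3) by (metis IntD1 IntD2)
  then show "\<exists>W. open W \<and> x \<in> W \<and> (\<forall>y\<in>W. h (f y) (g y) = h (f x) (g x))"
    using U(1,2) V(1,2) open_Int by blast
qed

lemma locally_constant_indicator:
  assumes "clopen S"
  shows "locally_constant (indicator S)"
  unfolding locally_constant_def
proof
  fix x
  show "\<exists>U. open U \<and> x \<in> U \<and> (\<forall>y\<in>U. indicator S y = indicator S x)"
  proof (cases "x \<in> S")
    case True
    then show ?thesis using assms by (intro exI[of _ S]) (auto simp: clopen_def)
  next
    case False
    then show ?thesis using assms by (intro exI[of _ "- S"]) (auto simp: clopen_def open_Compl)
  qed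
qed

inductive_set fun_span :: "('x \<Rightarrow> 'k::field) set \<Rightarrow> ('x \<Rightarrow> 'k) set" for G where
  fun_span_zero: "(\<lambda>_. 0) \<in> fun_span G"
| fun_span_base: "g \<in> G \<Longrightarrow> g \<in> fun_span G"
| fun_span_add: "f \<in> fun_span G \<Longrightarrow> g \<in> fun_span G \<Longrightarrow> (\<lambda>x. f x + g x) \<in> fun_span G"
| fun_span_scale: "f \<in> fun_span G \<Longrightarrow> (\<lambda>x. c * f x) \<in> fun_span G"

text \<open>No finiteness assumption: a sum over an infinite set is \<open>0\<close>, so supports of crossed
  product elements never have to be tracked.\<close>

lemma fun_span_sum:
  assumes "\<And>i. i \<in> I \<Longrightarrow> f i \<in> fun_span G"
  shows "(\<lambda>x. \<Sum>i\<in>I. f i x) \<in> fun_span G"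
proof (cases "finite I")
  case True
  then show ?thesis
    using assms by (induction I rule: finite_induct) (auto intro: fun_span.intros)
qed (simp add: fun_span_zero)

lemma fun_span_mult:
  assumes f: "f \<in> fun_span G" and h: "h \<in> fun_span H"
    and gens: "\<And>g k. g \<in> G \<Longrightarrow> k \<in> H \<Longrightarrow> (\<lambda>x. g x * k (\<phi> x)) \<in> fun_span K"
  shows "(\<lambda>x. f x * h (\<phi> x)) \<in> fun_span K"
  using f
proof induction
  case (fun_span_base g)
  show ?case
    using h
  proof induction
    case (fun_span_scale f c)
    then show ?case
      using fun_span.fun_span_scale[of _ K c] by (simp add: mult.left_commute)
  qed (auto simp: distrib_left intro: fun_span.intros gens fun_span_base)
next
  case (fun_span_scale f c)
  then show ?case
    using fun_span.fun_span_scale[of _ K c] by (simp add: mult.assoc)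
qed (auto simp: distrib_right intro: fun_span.intros)

lemma fun_span_conj:
  assumes cj: "field_involution cj" and f: "f \<in> fun_span G"
    and gens: "\<And>g. g \<in> G \<Longrightarrow> (\<lambda>x. cj (g (\<phi> x))) \<in> fun_span H"
  shows "(\<lambda>x. cj (f (\<phi> x))) \<in> fun_span H"
  using f
proof induction
  case fun_span_zero
  then show ?case
    by (simp add: field_involution_0[OF cj] fun_span.fun_span_zero)
qed (use cj in \<open>auto simp: field_involution_def intro: fun_span.intros gens\<close>)

lemma kspan_zero: "(\<lambda>n x. 0) \<in> kspan S"
  unfolding kspan_def by (intro CollectI exI[of _ "{}"]) auto

lemma kspan_base: "v \<in> S \<Longrightarrow> v \<in> kspan S"
  unfolding kspan_def by (intro CollectI exI[of _ "{v}"] exI[of _ "\<lambda>_. 1"]) auto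

lemma kspan_mono: "S \<subseteq> S' \<Longrightarrow> kspan S \<subseteq> kspan S'"
  unfolding kspan_def by blast

lemma kspan_scale: "u \<in> kspan S \<Longrightarrow> cp_scale a u \<in> kspan S"
  unfolding kspan_def cp_scale_def
  by (force simp: sum_distrib_left mult.assoc intro: exI[of _ "\<lambda>v. a * _ v"])

lemma kspan_add:
  assumes "u \<in> kspan S" "w \<in> kspan S"
  shows "cp_add u w \<in> kspan S"
proof -
  obtain F c where u: "u = (\<lambda>n x. \<Sum>v\<in>F. c v * v n x)" and F: "finite F" "F \<subseteq> S"
    using assms(1) unfolding kspan_def by blast
  obtain F' c' where w: "w = (\<lambda>n x. \<Sum>v\<in>F'. c' v * v n x)" and F': "finite F'" "F' \<subseteq> S"
    using assms(2) unfolding kspan_def by blast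
  have extend: "(\<Sum>v\<in>F \<union> F'. (if v \<in> A then e v else 0) * v n x) = (\<Sum>v\<in>A. e v * v n x)"
    if "A \<subseteq> F \<union> F'" for A e n x
    using that F F' by (intro sum.mono_neutral_cong_right) auto
  define d where "d v = (if v \<in> F then c v else 0) + (if v \<in> F' then c' v else 0)" for v
  have "(\<Sum>v\<in>F \<union> F'. d v * v n x) = u n x + w n x" for n x
    unfolding d_def distrib_right sum.distrib u w by (simp add: extend)
  then show ?thesis
    using F F' unfolding kspan_def cp_add_def by (auto intro!: exI[of _ "F \<union> F'"] exI[of _ d])
qed

lemma kspan_subset:
  assumes zero: "(\<lambda>n x. 0) \<in> A"
    and add: "\<And>a b. a \<in> A \<Longrightarrow> b \<in> A \<Longrightarrow> cp_add a b \<in> A"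
    and scale: "\<And>c a. a \<in> A \<Longrightarrow> cp_scale c a \<in> A"
    and "S \<subseteq> A"
  shows "kspan S \<subseteq> A"
proof
  fix v assume "v \<in> kspan S"
  then obtain F c where v: "v = (\<lambda>n x. \<Sum>u\<in>F. c u * u n x)" and "finite F" "F \<subseteq> S"
    unfolding kspan_def by blast
  from \<open>finite F\<close> \<open>F \<subseteq> S\<close> show "v \<in> A"
    unfolding v
  proof (induction F rule: finite_induct)
    case (insert u F)
    then have "cp_add (cp_scale (c u) u) (\<lambda>n x. \<Sum>u\<in>F. c u * u n x) \<in> A"
      using \<open>S \<subseteq> A\<close> by (auto intro: add scale)
    with insert show ?case
      by (simp add: cp_add_def cp_scale_def)
  qed (simp add: zero)
qed

lemma cp_add_embed: "cp_add (cp_embed f) (cp_embed g) = cp_embed (\<lambda>x. f x + g x)"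
  by (simp add: cp_embed_def cp_add_def fun_eq_iff)

lemma cp_scale_embed: "cp_scale c (cp_embed f) = cp_embed (\<lambda>x. c * f x)"
  by (simp add: cp_embed_def cp_scale_def fun_eq_iff)

lemma cp_embed_fun_span:
  fixes f :: "'x \<Rightarrow> 'k::field"
  assumes "f \<in> fun_span G"
  shows "cp_embed f \<in> kspan (cp_embed ` G)"
  using assms
proof induction
  case fun_span_zero
  have "cp_embed (\<lambda>_. 0) = (\<lambda>n (x::'x). 0::'k)"
    by (simp add: cp_embed_def fun_eq_iff)
  then show ?case
    by (simp add: kspan_zero)
next
  case (fun_span_add f g)
  then show ?case
    using kspan_add[OF fun_span_add.IH] by (simp add: cp_add_embed)
next
  case (fun_span_scale f c)
  then show ?case
    using kspan_scale[OF fun_span_scale.IH] by (simp add: cp_scale_embed)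
qed (simp add: kspan_base)

lemma kspan_subset_star_subalg:
  fixes S :: "(int \<Rightarrow> 'x \<Rightarrow> 'k::field) set"
  assumes "S \<subseteq> star_subalg_gen T Ti cj G"
  shows "kspan S \<subseteq> star_subalg_gen T Ti cj G"
proof (rule kspan_subset[OF _ _ _ assms])
  have "(\<lambda>n (x::'x). 0::'k) = cp_scale 0 cp_one"
    by (simp add: cp_scale_def)
  then show "(\<lambda>n x. 0) \<in> star_subalg_gen T Ti cj G"
    by (simp only: star_subalg_gen.gen_scale star_subalg_gen.gen_one)
qed (fact star_subalg_gen.gen_add star_subalg_gen.gen_scale)+

lemma kspan_subset_locally_constant:
  fixes S :: "(int \<Rightarrow> 'x::topological_space \<Rightarrow> 'k::field) set"
  assumes "S \<subseteq> {cp_embed f | f. locally_constant f}"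
  shows "kspan S \<subseteq> {cp_embed f | f. locally_constant f}"
proof (rule kspan_subset[OF _ _ _ assms])
  have "(\<lambda>n (x::'x). 0::'k) = cp_embed (\<lambda>_. 0)"
    by (simp add: cp_embed_def fun_eq_iff)
  then show "(\<lambda>n (x::'x). 0::'k) \<in> {cp_embed f | f. locally_constant f}"
    using locally_constant_const[of 0] by blast
next
  fix a b :: "int \<Rightarrow> 'x \<Rightarrow> 'k"
  assume "a \<in> {cp_embed f | f. locally_constant f}" "b \<in> {cp_embed f | f. locally_constant f}"
  then obtain f g where "a = cp_embed f" "b = cp_embed g" "locally_constant f" "locally_constant g"
    by blast
  moreover have "locally_constant (\<lambda>x. f x + g x)"
    using locally_constant_combine[of f g "(+)"] \<open>locally_constant f\<close> \<open>locally_constant g\<close> by simp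
  ultimately show "cp_add a b \<in> {cp_embed f | f. locally_constant f}"
    by (auto simp: cp_add_embed)
next
  fix c and a :: "int \<Rightarrow> 'x \<Rightarrow> 'k"
  assume "a \<in> {cp_embed f | f. locally_constant f}"
  then obtain f where "a = cp_embed f" "locally_constant f"
    by blast
  moreover have "locally_constant (\<lambda>x. c * f x)"
    using locally_constant_combine[of f f "\<lambda>a _. c * a"] \<open>locally_constant f\<close> by simp
  ultimately show "cp_scale c a \<in> {cp_embed f | f. locally_constant f}"
    by (auto simp: cp_scale_embed)
qed

lemma kspan_subset_locally_constant_subalg:
  fixes S :: "(int \<Rightarrow> 'x::topological_space \<Rightarrow> 'k::field) set"
  assumes "S \<subseteq> {b \<in> star_subalg_gen T Ti cj G. \<exists>f. locally_constant f \<and> b = cp_embed f}"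
  shows "kspan S \<subseteq> {b \<in> star_subalg_gen T Ti cj G. \<exists>f. locally_constant f \<and> b = cp_embed f}"
proof -
  have "kspan S \<subseteq> star_subalg_gen T Ti cj G"
    using assms by (intro kspan_subset_star_subalg) blast
  moreover have "kspan S \<subseteq> {cp_embed f | f. locally_constant f}"
    using assms by (intro kspan_subset_locally_constant) blast
  ultimately show ?thesis
    by blast
qed

section \<open>Integer powers of an invertible map and cylinder sets\<close>

lemma continuous_on_funpow:
  fixes f :: "'a::topological_space \<Rightarrow> 'a"
  assumes "continuous_on UNIV f"
  shows "continuous_on UNIV (f ^^ n)"
proof (induction n)
  case (Suc n)
  then show ?case
    using continuous_on_compose2[OF assms Suc] by (simp add: comp_def)
qed (simp add: continuous_on_id)

locale invertible_map =
  fixes T Ti :: "'x \<Rightarrow> 'x"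
  assumes T_Ti [simp]: "T (Ti x) = x" and Ti_T [simp]: "Ti (T x) = x"
begin

abbreviation Tp :: "int \<Rightarrow> 'x \<Rightarrow> 'x" where
  "Tp \<equiv> Tpow T Ti"

lemma Tpow_0 [simp]: "Tp 0 = id"
  by (simp add: Tpow_def fun_eq_iff)

lemma Tpow_add_1: "Tp (i + 1) x = T (Tp i x)"
proof (cases "0 \<le> i")
  case True
  then show ?thesis by (simp add: Tpow_def nat_add_distrib)
next
  case False
  then have "nat (- i) = Suc (nat (- (i + 1)))" by simp
  with False show ?thesis by (simp add: Tpow_def)
qed

lemma Tpow_diff_1: "Tp (i - 1) x = Ti (Tp i x)"
  using Tpow_add_1[of "i - 1"] by simp

lemma Tpow_add: "Tp (i + j) x = Tp i (Tp j x)"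
proof (induction i rule: int_induct[where k = 0])
  case base
  show ?case by simp
next
  case (step1 i)
  have "Tp (i + 1 + j) x = Tp (i + j + 1) x" by (simp add: algebra_simps)
  with step1 show ?case by (simp add: Tpow_add_1)
next
  case (step2 i)
  have "Tp (i - 1 + j) x = Tp (i + j - 1) x" by (simp add: algebra_simps)
  with step2 show ?case by (simp add: Tpow_diff_1)
qed

lemma Tpow_image: "Tp i ` A = Tp (- i) -` A"
  using Tpow_add[of i "- i"] Tpow_add[of "- i" i] by (auto intro: image_eqI)

definition cylinder :: "int set \<Rightarrow> (int \<Rightarrow> 'x set) \<Rightarrow> 'x set" where
  "cylinder I Z = (\<Inter>k\<in>I. Tp k ` Z k)"

lemma mem_cylinder: "x \<in> cylinder I Z \<longleftrightarrow> (\<forall>k\<in>I. Tp (- k) x \<in> Z k)"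
  by (simp add: cylinder_def Tpow_image)

lemma Tpow_image_cylinder:
  "Tp i ` cylinder {a..b} Z = cylinder {a + i..b + i} (\<lambda>k. Z (k - i))"
proof -
  have shift: "Tp (- k) (Tp (- i) x) = Tp (- (k + i)) x" for k x
    using Tpow_add[of "- k" "- i"] by (simp add: algebra_simps)
  have shifted: "(\<forall>k\<in>{a..b}. Tp (- (k + i)) x \<in> Z k) \<longleftrightarrow>
      (\<forall>k\<in>{a + i..b + i}. Tp (- k) x \<in> Z (k - i))" for x
  proof (intro iffI ballI)
    fix k assume H: "\<forall>k\<in>{a..b}. Tp (- (k + i)) x \<in> Z k" and k: "k \<in> {a + i..b + i}"
    have "Tp (- (k - i + i)) x \<in> Z (k - i)"
      by (rule bspec[OF H]) (use k in auto)
    then show "Tp (- k) x \<in> Z (k - i)"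
      by simp
  next
    fix k assume H: "\<forall>k\<in>{a + i..b + i}. Tp (- k) x \<in> Z (k - i)" and k: "k \<in> {a..b}"
    have "Tp (- (k + i)) x \<in> Z (k + i - i)"
      by (rule bspec[OF H]) (use k in auto)
    then show "Tp (- (k + i)) x \<in> Z k"
      by simp
  qed
  show ?thesis
  proof (rule set_eqI)
    fix x
    have "x \<in> Tp i ` cylinder {a..b} Z \<longleftrightarrow> (\<forall>k\<in>{a..b}. Tp (- (k + i)) x \<in> Z k)"
      by (simp only: Tpow_image vimage_eq mem_cylinder shift)
    also have "\<dots> \<longleftrightarrow> x \<in> cylinder {a + i..b + i} (\<lambda>k. Z (k - i))"
      by (simp only: shifted mem_cylinder)
    finally show "x \<in> Tp i ` cylinder {a..b} Z \<longleftrightarrow> x \<in> cylinder {a + i..b + i} (\<lambda>k. Z (k - i))" .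
  qed
qed

lemma Int_cylinder:
  assumes disj: "disjoint P" and Z: "Z ` I \<subseteq> P" and Z': "Z' ` J \<subseteq> P"
  shows "cylinder I Z \<inter> cylinder J Z' = {} \<or>
    cylinder I Z \<inter> cylinder J Z' = cylinder (I \<union> J) (\<lambda>k. if k \<in> I then Z k else Z' k)"
proof (cases "\<exists>k\<in>I \<inter> J. Z k \<noteq> Z' k")
  case True
  then obtain k where k: "k \<in> I" "k \<in> J" "Z k \<noteq> Z' k" by blast
  then have "Z k \<inter> Z' k = {}"
    using disj Z Z' by (auto simp: disjoint_def)
  with k have "cylinder I Z \<inter> cylinder J Z' = {}"
    by (auto simp: mem_cylinder dest!: bspec[of _ _ k])
  then show ?thesis ..
next
  case False
  then have "cylinder I Z \<inter> cylinder J Z' = cylinder (I \<union> J) (\<lambda>k. if k \<in> I then Z k else Z' k)"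
    unfolding set_eq_iff Int_iff mem_cylinder by auto
  then show ?thesis ..
qed

definition cylinders :: "'x set set \<Rightarrow> int \<Rightarrow> 'x set set" where
  "cylinders P n =
    {cylinder {a..b} Z | a b Z. a \<le> min 0 n \<and> max 0 n \<le> b + 1 \<and> Z ` {a..b} \<subseteq> P}"

lemma UNIV_in_cylinders_0: "UNIV \<in> cylinders P 0"
proof -
  have "UNIV = cylinder {0..-1} Z" for Z
    by (simp add: cylinder_def)
  then show ?thesis
    unfolding cylinders_def by fastforce
qed

lemma in_cylinders_1: "Z \<in> P \<Longrightarrow> Z \<in> cylinders P 1"
  unfolding cylinders_def
  by (intro CollectI exI[of _ 0] exI[of _ "\<lambda>_. Z"]) (simp add: cylinder_def)

lemma cylinders_0E:
  assumes "S \<in> cylinders P 0"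
  obtains r s :: nat and Z where "S = cylinder {- int r..int s - 1} Z"
    and "Z ` {- int r..int s - 1} \<subseteq> P"
proof -
  obtain a b Z where S: "S = cylinder {a..b} Z" and Z: "Z ` {a..b} \<subseteq> P"
    and ab: "a \<le> min 0 0" "max 0 0 \<le> b + 1"
    using assms unfolding cylinders_def by blast
  have window: "{- int (nat (- a))..int (nat (b + 1)) - 1} = {a..b}"
    using ab by simp
  show ?thesis
    by (rule that[of "nat (- a)" "nat (b + 1)" Z]) (simp_all only: window S Z)
qed

lemma Tpow_image_cylinders:
  assumes "S \<in> cylinders P (- n)"
  shows "Tp n ` S \<in> cylinders P n"
proof -
  obtain a b Z where S: "S = cylinder {a..b} Z" and Z: "Z ` {a..b} \<subseteq> P"
    and ab: "a \<le> min 0 (- n)" "max 0 (- n) \<le> b + 1"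
    using assms unfolding cylinders_def by blast
  have "(\<lambda>k. Z (k - n)) ` {a + n..b + n} \<subseteq> P"
    using Z by force
  moreover have "a + n \<le> min 0 n" "max 0 n \<le> b + n + 1"
    using ab by auto
  ultimately show ?thesis
    unfolding S Tpow_image_cylinder cylinders_def by blast
qed

lemma cylinders_mult:
  assumes disj: "disjoint P" and S: "S \<in> cylinders P i" and S': "S' \<in> cylinders P j"
  shows "S \<inter> Tp i ` S' = {} \<or> S \<inter> Tp i ` S' \<in> cylinders P (i + j)"
proof -
  obtain a b Z where S: "S = cylinder {a..b} Z" and Z: "Z ` {a..b} \<subseteq> P"
    and ab: "a \<le> min 0 i" "max 0 i \<le> b + 1"
    using S unfolding cylinders_def by blast
  obtain a' b' Z' where S': "S' = cylinder {a'..b'} Z'" and Z': "Z' ` {a'..b'} \<subseteq> P"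
    and ab': "a' \<le> min 0 j" "max 0 j \<le> b' + 1"
    using S' unfolding cylinders_def by blast
  have Z'_shift: "(\<lambda>k. Z' (k - i)) ` {a' + i..b' + i} \<subseteq> P"
    using Z' by force
  \<comment> \<open>both windows reach position \<open>i\<close>, so their union is again a window\<close>
  have window: "{a..b} \<union> {a' + i..b' + i} = {min a (a' + i)..max b (b' + i)}"
    using ab ab' by auto
  define W where "W k = (if k \<in> {a..b} then Z k else Z' (k - i))" for k
  have "W ` {min a (a' + i)..max b (b' + i)} \<subseteq> P"
    using Z Z'_shift unfolding W_def window[symmetric] by auto
  moreover have "min a (a' + i) \<le> min 0 (i + j)" "max 0 (i + j) \<le> max b (b' + i) + 1"
    using ab ab' by auto
  ultimately have "cylinder {min a (a' + i)..max b (b' + i)} W \<in> cylinders P (i + j)"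
    unfolding cylinders_def by blast
  then show ?thesis
    using Int_cylinder[OF disj Z Z'_shift]
    unfolding S S' Tpow_image_cylinder window W_def by auto
qed

end

section \<open>Monomials of the crossed product\<close>

definition cp_monom :: "int \<Rightarrow> 'x set \<Rightarrow> int \<Rightarrow> 'x \<Rightarrow> 'k::field" where
  "cp_monom n S = (\<lambda>m. if m = n then indicator S else (\<lambda>_. 0))"

lemma cp_one_eq_monom: "cp_one = cp_monom 0 UNIV"
  by (simp add: cp_one_def cp_embed_def cp_monom_def fun_eq_iff)

lemma chi_t_eq_monom: "chi_t Z = cp_monom 1 Z"
  by (simp add: chi_t_def cp_monom_def)

lemma cp_embed_indicator: "cp_embed (indicator S) = cp_monom 0 S"
  by (simp add: cp_embed_def cp_monom_def)

context invertible_map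
begin

lemma cp_mult_monom_left:
  "cp_mult T Ti (cp_monom i A) b n x = indicator A x * b (n - i) (Tp (- i) x)"
proof -
  have "cp_mult T Ti (cp_monom i A) b n x = (\<Sum>k\<in>{i}. cp_monom i A k x * b (n - k) (Tp (- k) x))"
    unfolding cp_mult_def
    by (rule sum.mono_neutral_left) (auto simp: cp_monom_def)
  also have "\<dots> = cp_monom i A i x * b (n - i) (Tp (- i) x)"
    by simp
  also have "\<dots> = indicator A x * b (n - i) (Tp (- i) x)"
    by (simp add: cp_monom_def)
  finally show ?thesis .
qed

lemma cp_mult_monom:
  "cp_mult T Ti (cp_monom i A) (cp_monom j B) = cp_monom (i + j) (A \<inter> Tp i ` B)"
  by (intro ext)
    (simp add: cp_mult_monom_left, simp add: cp_monom_def Tpow_image indicator_inter_arith indicator_vimage)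

lemma cp_star_monom:
  assumes "field_involution cj"
  shows "cp_star T Ti cj (cp_monom i A) = cp_monom (- i) (Tp (- i) ` A)"
  using assms
  by (auto simp: fun_eq_iff cp_star_def cp_monom_def Tpow_image field_involution_indicator
      field_involution_0 indicator_vimage)

lemma coeff_span_mult:
  fixes f h :: "'x \<Rightarrow> 'k::field"
  assumes disj: "disjoint P"
    and f: "f \<in> fun_span (indicator ` cylinders P i)"
    and h: "h \<in> fun_span (indicator ` cylinders P j)"
  shows "(\<lambda>x. f x * h (Tp (- i) x)) \<in> fun_span (indicator ` cylinders P (i + j))"
proof (rule fun_span_mult[OF f h])
  fix g k :: "'x \<Rightarrow> 'k"
  assume "g \<in> indicator ` cylinders P i" "k \<in> indicator ` cylinders P j"
  then obtain S S' where S: "S \<in> cylinders P i" "g = indicator S"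
    and S': "S' \<in> cylinders P j" "k = indicator S'"
    by blast
  have "(\<lambda>x. g x * k (Tp (- i) x)) = indicator (S \<inter> Tp i ` S')"
    by (simp add: S(2) S'(2) fun_eq_iff Tpow_image indicator_inter_arith indicator_vimage)
  moreover have "(indicator (S \<inter> Tp i ` S') :: 'x \<Rightarrow> 'k) \<in> fun_span (indicator ` cylinders P (i + j))"
  proof (cases "S \<inter> Tp i ` S' = {}")
    case True
    then have "indicator (S \<inter> Tp i ` S') = (\<lambda>_. 0 :: 'k)"
      by (simp add: fun_eq_iff)
    then show ?thesis
      by (simp add: fun_span_zero)
  next
    case False
    then show ?thesis
      using cylinders_mult[OF disj S(1) S'(1)] by (simp add: fun_span_base)
  qed
  ultimately show "(\<lambda>x. g x * k (Tp (- i) x)) \<in> fun_span (indicator ` cylinders P (i + j))"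
    by simp
qed

lemma coeff_span_star:
  fixes f :: "'x \<Rightarrow> 'k::field"
  assumes cj: "field_involution cj" and f: "f \<in> fun_span (indicator ` cylinders P (- n))"
  shows "(\<lambda>x. cj (f (Tp (- n) x))) \<in> fun_span (indicator ` cylinders P n)"
proof (rule fun_span_conj[OF cj f])
  fix g :: "'x \<Rightarrow> 'k"
  assume "g \<in> indicator ` cylinders P (- n)"
  then obtain S where S: "S \<in> cylinders P (- n)" "g = indicator S"
    by blast
  have "(\<lambda>x. cj (g (Tp (- n) x))) = indicator (Tp n ` S)"
    by (simp add: S(2) fun_eq_iff Tpow_image indicator_vimage field_involution_indicator[OF cj])
  then show "(\<lambda>x. cj (g (Tp (- n) x))) \<in> fun_span (indicator ` cylinders P n)"
    using Tpow_image_cylinders[OF S(1)] by (auto intro: fun_span_base)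
qed

lemma monom_coeff_span:
  "S \<in> cylinders P n \<Longrightarrow> cp_monom n S m \<in> fun_span (indicator ` cylinders P m)"
  by (auto simp: cp_monom_def intro: fun_span.intros)

lemma star_subalg_gen_coeff_span:
  fixes b :: "int \<Rightarrow> 'x \<Rightarrow> 'k::field"
  assumes disj: "disjoint P" and cj: "field_involution cj"
    and b: "b \<in> star_subalg_gen T Ti cj (chi_t ` P)"
  shows "b n \<in> fun_span (indicator ` cylinders P n)"
  using b
proof (induction arbitrary: n)
  case gen_one
  show ?case
    unfolding cp_one_eq_monom by (rule monom_coeff_span[OF UNIV_in_cylinders_0])
next
  case (gen_base s)
  then show ?case
    by (auto simp: chi_t_eq_monom intro: monom_coeff_span in_cylinders_1)
next
  case (gen_add a b)
  then show ?case
    by (simp add: cp_add_def fun_span_add)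
next
  case (gen_scale a c)
  then show ?case
    by (simp add: cp_scale_def fun_span_scale)
next
  case (gen_mult a b)
  have "(\<lambda>x. a k x * b (n - k) (Tp (- k) x)) \<in> fun_span (indicator ` cylinders P n)" for k
    using coeff_span_mult[OF disj gen_mult.IH(1)[of k] gen_mult.IH(2)[of "n - k"]] by simp
  then show ?case
    unfolding cp_mult_def by (rule fun_span_sum)
next
  case (gen_star a)
  show ?case
    using coeff_span_star[OF cj gen_star.IH[of "- n"]] by (simp add: cp_star_def)
qed

lemma word_monom_in_subalg:
  assumes "Z ` {0..int s - 1} \<subseteq> P"
  shows "(cp_monom (int s) (cylinder {0..int s - 1} Z) :: int \<Rightarrow> 'x \<Rightarrow> 'k::field)
    \<in> star_subalg_gen T Ti cj (chi_t ` P)"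
  using assms
proof (induction s)
  case 0
  have "cylinder {0..-1} Z = UNIV"
    by (simp add: cylinder_def)
  then show ?case
    using star_subalg_gen.gen_one by (simp add: cp_one_eq_monom)
next
  case (Suc s)
  have "{0..int (Suc s) - 1} = insert (int s) {0..int s - 1}"
    by auto
  then have extend:
      "cylinder {0..int s - 1} Z \<inter> Tp (int s) ` Z (int s) = cylinder {0..int (Suc s) - 1} Z"
    by (auto simp: cylinder_def)
  have "Z ` {0..int s - 1} \<subseteq> P"
    using Suc.prems by force
  then have "(cp_monom (int s) (cylinder {0..int s - 1} Z) :: int \<Rightarrow> 'x \<Rightarrow> 'k)
      \<in> star_subalg_gen T Ti cj (chi_t ` P)"
    by (rule Suc.IH)
  moreover have "chi_t (Z (int s)) \<in> star_subalg_gen T Ti cj (chi_t ` P)"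
    using Suc.prems by (intro star_subalg_gen.gen_base imageI) force
  ultimately have "cp_mult T Ti (cp_monom (int s) (cylinder {0..int s - 1} Z)) (chi_t (Z (int s)))
      \<in> star_subalg_gen T Ti cj (chi_t ` P)"
    by (rule star_subalg_gen.gen_mult)
  then show ?case
    by (simp add: chi_t_eq_monom cp_mult_monom extend add.commute)
qed

lemma monom_projections_in_subalg:
  assumes cj: "field_involution cj"
    and x: "(cp_monom n A :: int \<Rightarrow> 'x \<Rightarrow> 'k::field) \<in> star_subalg_gen T Ti cj S"
  shows "(cp_monom 0 A :: int \<Rightarrow> 'x \<Rightarrow> 'k) \<in> star_subalg_gen T Ti cj S"
    and "(cp_monom 0 (Tp (- n) ` A) :: int \<Rightarrow> 'x \<Rightarrow> 'k) \<in> star_subalg_gen T Ti cj S"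
proof -
  have x_star: "cp_star T Ti cj (cp_monom n A) \<in> star_subalg_gen T Ti cj S"
    using x by (rule star_subalg_gen.gen_star)
  have "Tp n ` Tp (- n) ` A = A"
    using Tpow_add[of n "- n"] by (simp add: image_image)
  then show "(cp_monom 0 A :: int \<Rightarrow> 'x \<Rightarrow> 'k) \<in> star_subalg_gen T Ti cj S"
    using star_subalg_gen.gen_mult[OF x x_star] by (simp add: cp_star_monom[OF cj] cp_mult_monom)
  have "Tp (- n) ` A \<inter> Tp (- n) ` Tp n ` Tp (- n) ` A = Tp (- n) ` A"
    using \<open>Tp n ` Tp (- n) ` A = A\<close> by simp
  then show "(cp_monom 0 (Tp (- n) ` A) :: int \<Rightarrow> 'x \<Rightarrow> 'k) \<in> star_subalg_gen T Ti cj S"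
    using star_subalg_gen.gen_mult[OF x_star x] by (simp add: cp_star_monom[OF cj] cp_mult_monom)
qed

lemma cylinder_projection_in_subalg:
  assumes cj: "field_involution cj" and Z: "Z ` {- int r..int s - 1} \<subseteq> P"
  shows "(cp_monom 0 (cylinder {- int r..int s - 1} Z) :: int \<Rightarrow> 'x \<Rightarrow> 'k::field)
    \<in> star_subalg_gen T Ti cj (chi_t ` P)"
proof -
  have "(\<lambda>k. Z (k - int r)) ` {0..int r - 1} \<subseteq> P"
    using Z by force
  then have "(cp_monom 0 (Tp (- int r) ` cylinder {0..int r - 1} (\<lambda>k. Z (k - int r)))
      :: int \<Rightarrow> 'x \<Rightarrow> 'k) \<in> star_subalg_gen T Ti cj (chi_t ` P)"
    by (rule monom_projections_in_subalg(2)[OF cj word_monom_in_subalg])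
  then have past: "(cp_monom 0 (cylinder {- int r..- 1} Z) :: int \<Rightarrow> 'x \<Rightarrow> 'k)
      \<in> star_subalg_gen T Ti cj (chi_t ` P)"
    by (simp add: Tpow_image_cylinder)
  have "Z ` {0..int s - 1} \<subseteq> P"
    using Z by force
  then have future: "(cp_monom 0 (cylinder {0..int s - 1} Z) :: int \<Rightarrow> 'x \<Rightarrow> 'k)
      \<in> star_subalg_gen T Ti cj (chi_t ` P)"
    by (rule monom_projections_in_subalg(1)[OF cj word_monom_in_subalg])
  have "{- int r..int s - 1} = {- int r..- 1} \<union> {0..int s - 1}"
    by auto
  then have "cylinder {- int r..- 1} Z \<inter> Tp 0 ` cylinder {0..int s - 1} Z
      = cylinder {- int r..int s - 1} Z"
    by (auto simp: cylinder_def)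
  then show ?thesis
    using star_subalg_gen.gen_mult[OF past future] by (simp add: cp_mult_monom)
qed

definition cylinder_projections :: "'x set set \<Rightarrow> (int \<Rightarrow> 'x \<Rightarrow> 'k::field) set" where
  "cylinder_projections P = {cp_one} \<union>
    {cp_embed (indicator (cylinder {- int r..int s - 1} Z))
      | (r::nat) (s::nat) Z. Z ` {- int r..int s - 1} \<subseteq> P}"

lemma diagonal_subalg_subset_kspan:
  assumes disj: "disjoint P" and cj: "field_involution cj"
  shows "{b \<in> star_subalg_gen T Ti cj (chi_t ` P). \<exists>f. b = cp_embed f}
    \<subseteq> (kspan (cylinder_projections P) :: (int \<Rightarrow> 'x \<Rightarrow> 'k::field) set)"
proof
  fix b :: "int \<Rightarrow> 'x \<Rightarrow> 'k"
  assume "b \<in> {b \<in> star_subalg_gen T Ti cj (chi_t ` P). \<exists>f. b = cp_embed f}"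
  then obtain f where b: "b \<in> star_subalg_gen T Ti cj (chi_t ` P)" "b = cp_embed f"
    by blast
  have "f \<in> fun_span (indicator ` cylinders P 0)"
    using star_subalg_gen_coeff_span[OF disj cj b(1), of 0] b(2) by (simp add: cp_embed_def)
  then have "b \<in> kspan (cp_embed ` indicator ` cylinders P 0)"
    using b(2) cp_embed_fun_span by blast
  moreover have "cp_embed ` indicator ` cylinders P 0 \<subseteq> cylinder_projections P"
    unfolding cylinder_projections_def by (blast elim: cylinders_0E)
  ultimately show "b \<in> kspan (cylinder_projections P)"
    using kspan_mono by blast
qed

end

locale self_homeomorphism = invertible_map T Ti for T Ti :: "'x::topological_space \<Rightarrow> 'x" +
  assumes continuous_T: "continuous_on UNIV T" and continuous_Ti: "continuous_on UNIV Ti"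
begin

lemma clopen_Tpow_image:
  assumes "clopen Z"
  shows "clopen (Tp k ` Z)"
proof -
  have "continuous_on UNIV (Tp (- k))"
    using continuous_T continuous_Ti by (simp add: Tpow_def continuous_on_funpow)
  then show ?thesis
    using assms by (simp add: clopen_def Tpow_image open_vimage closed_vimage)
qed

lemma clopen_cylinder:
  assumes "finite I" "\<And>k. k \<in> I \<Longrightarrow> clopen (Z k)"
  shows "clopen (cylinder I Z)"
  using assms clopen_Tpow_image unfolding clopen_def cylinder_def
  by (auto intro: open_INT closed_INT)

lemma cylinder_projections_subset:
  assumes cj: "field_involution cj" and clopen_P: "\<And>Z. Z \<in> P \<Longrightarrow> clopen Z"
  shows "(cylinder_projections P :: (int \<Rightarrow> 'x \<Rightarrow> 'k::field) set)
    \<subseteq> {b \<in> star_subalg_gen T Ti cj (chi_t ` P). \<exists>f. locally_constant f \<and> b = cp_embed f}"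
    (is "_ \<subseteq> ?B0")
proof -
  have "cp_embed (indicator (cylinder {- int r..int s - 1} Z)) \<in> ?B0"
    if Z: "Z ` {- int r..int s - 1} \<subseteq> P" for r s Z
  proof -
    have "clopen (cylinder {- int r..int s - 1} Z)"
      using Z clopen_P by (intro clopen_cylinder) (auto simp: image_subset_iff)
    then have "locally_constant (indicator (cylinder {- int r..int s - 1} Z) :: 'x \<Rightarrow> 'k)"
      by (rule locally_constant_indicator)
    moreover have "cp_embed (indicator (cylinder {- int r..int s - 1} Z))
        \<in> star_subalg_gen T Ti cj (chi_t ` P)"
      using cylinder_projection_in_subalg[OF cj Z] by (simp add: cp_embed_indicator)
    ultimately show ?thesis
      by blast
  qed
  moreover have "cp_one \<in> ?B0"
    unfolding mem_Collect_eq
    by (intro conjI star_subalg_gen.gen_one exI[of _ "\<lambda>_. 1"] locally_constant_const)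
      (simp add: cp_one_def)
  ultimately show ?thesis
    unfolding cylinder_projections_def by blast
qed

end

theorem lemma3p4:
  fixes T Ti :: "'x::metric_space \<Rightarrow> 'x"
    and cj :: "'k::field \<Rightarrow> 'k"
    and E :: "'x set" and P :: "'x set set"
  assumes "compact (UNIV :: 'x set)"
    and "totally_disconnected_space TYPE('x)"
    and "homeomorphism UNIV UNIV T Ti"
    and "field_involution cj"
    and "E \<noteq> {}" and "clopen E"
    and "clopen_partition P (UNIV - E)"
  shows "{b \<in> star_subalg_gen T Ti cj (chi_t ` P). \<exists>f. locally_constant f \<and> b = cp_embed f}
    = kspan ({cp_one} \<union>
        {cp_embed (indicator (\<Inter>i\<in>{- int r .. int s - 1}. Tpow T Ti i ` Z i))
          | (r::nat) (s::nat) Z. \<forall>i\<in>{- int r .. int s - 1}. Z i \<in> P})"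
    (is "?B0 = kspan ?G")
proof -
  interpret self_homeomorphism T Ti
    using assms(3) by unfold_locales (auto simp: homeomorphism_def)
  have disj: "disjoint P" and clopen_P: "\<And>Z. Z \<in> P \<Longrightarrow> clopen Z"
    using assms(7) by (auto simp: clopen_partition_def disjoint_def)
  have G: "?G = cylinder_projections P"
    unfolding cylinder_projections_def cylinder_def image_subset_iff by blast
  have "?B0 \<subseteq> kspan (cylinder_projections P)"
    using diagonal_subalg_subset_kspan[OF disj assms(4)] by blast
  moreover have "kspan (cylinder_projections P) \<subseteq> ?B0"
    by (intro kspan_subset_locally_constant_subalg cylinder_projections_subset assms(4) clopen_P)
  ultimately show ?thesis
    unfolding G by (rule equalityI)
qed

end
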